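(* Let $X$ be a complex reflexive Banach space, $x\in X$ a unit vector, and $x^*\in X^*$ a functional that exposes $x$. If $T=\{e^{tA}:t\ge 0\}$ is a $(C_0)$ contraction semigroup with generator $A$ such that \[\lim_{t\to\infty}|\langle T(t)x,x^*\rangle|=1,\] then $x$ is in the domain of $A$ and $Ax=i\lambda x$ for some real number $\lambda$.
   Context: A functional $x^*\in X^*$ exposes the unit vector $x$ if $1=\|x^*\|=\langle x,x^*\rangle$ and $\Re\langle y,x^*\rangle<1$ for every unit vector $y\neq x$. *)

theory Defs
  imports "HOL-Analysis.Analysis"
begin

class complex_banach = banach +
  fixes cscale :: "complex \<Rightarrow> 'a \<Rightarrow> 'a"  (infixr "*\<^sub>C" 75)
  assumes cscale_of_real: "cscale (complex_of_real r) x = r *\<^sub>R x"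
    and cscale_add_left: "cscale (a + b) x = cscale a x + cscale b x"
    and cscale_add_right: "cscale a (x + y) = cscale a x + cscale a y"
    and cscale_assoc: "cscale a (cscale b x) = cscale (a * b) x"
    and norm_cscale: "norm (cscale a x) = cmod a * norm x"

definition bounded_clinear_op :: "('a::complex_banach \<Rightarrow> 'b::complex_banach) \<Rightarrow> bool" where
  "bounded_clinear_op L \<longleftrightarrow> bounded_linear L \<and> (\<forall>c x. L (c *\<^sub>C x) = c *\<^sub>C L x)"

definition dual_space :: "('a::complex_banach \<Rightarrow> complex) set" where
  "dual_space = {f. bounded_linear f \<and> (\<forall>c x. f (c *\<^sub>C x) = c * f x)}"

text \<open>Reflexivity: every bounded complex-linear functional on X* (with the operator
norm) is evaluation at some point of X, i.e. the canonical map X \<rightarrow> X** is onto.\<close>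
definition reflexive_space :: "'a::complex_banach itself \<Rightarrow> bool" where
  "reflexive_space _ \<longleftrightarrow>
    (\<forall>\<Phi> :: ('a \<Rightarrow> complex) \<Rightarrow> complex.
       ((\<forall>f\<in>dual_space. \<forall>g\<in>dual_space. \<Phi> (\<lambda>x. f x + g x) = \<Phi> f + \<Phi> g) \<and>
        (\<forall>f\<in>dual_space. \<forall>c. \<Phi> (\<lambda>x. c * f x) = c * \<Phi> f) \<and>
        (\<exists>K. \<forall>f\<in>dual_space. cmod (\<Phi> f) \<le> K * onorm f))
       \<longrightarrow> (\<exists>z::'a. \<forall>f\<in>dual_space. \<Phi> f = f z))"

definition exposes :: "('a::complex_banach \<Rightarrow> complex) \<Rightarrow> 'a \<Rightarrow> bool" where
  "exposes xs x \<longleftrightarrow> xs \<in> dual_space \<and> norm x = 1 \<and> onorm xs = 1 \<and> xs x = 1 \<and>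
     (\<forall>y. norm y = 1 \<and> y \<noteq> x \<longrightarrow> Re (xs y) < 1)"

definition C0_contraction_semigroup :: "(real \<Rightarrow> 'a::complex_banach \<Rightarrow> 'a) \<Rightarrow> bool" where
  "C0_contraction_semigroup T \<longleftrightarrow>
     (\<forall>t\<ge>0. bounded_clinear_op (T t)) \<and>
     (\<forall>x. T 0 x = x) \<and>
     (\<forall>s\<ge>0. \<forall>t\<ge>0. \<forall>x. T (s + t) x = T s (T t x)) \<and>
     (\<forall>x. ((\<lambda>t. T t x) \<longlongrightarrow> x) (at_right 0)) \<and>
     (\<forall>t\<ge>0. \<forall>x. norm (T t x) \<le> norm x)"

definition gen_domain :: "(real \<Rightarrow> 'a::complex_banach \<Rightarrow> 'a) \<Rightarrow> 'a set" where
  "gen_domain T = {x. \<exists>y. ((\<lambda>h. (1 / h) *\<^sub>R (T h x - x)) \<longlongrightarrow> y) (at_right 0)}"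

definition generator :: "(real \<Rightarrow> 'a::complex_banach \<Rightarrow> 'a) \<Rightarrow> 'a \<Rightarrow> 'a" where
  "generator T x = Lim (at_right 0) (\<lambda>h. (1 / h) *\<^sub>R (T h x - x))"

end

theory Submission
  imports Defs
begin

(* The orbit T(t)x stays in the unit ball, so by reflexivity (Tychonoff applied to the
   values f(T(t)x) of all functionals) it has a weak cluster point z as t tends to infinity,
   and norm z <= 1 by Hahn-Banach. Since |x*(T(s + t)x)| tends to 1, every T(s)z satisfies
   |x*(T(s)z)| = 1. As x* exposes x, a vector of the unit ball on which |x*| = 1 is a
   unimodular multiple of x; applied to z and to T(s)z this gives T(s)x = g(s)x with
   |g(s)| = 1. The scalar function g is a continuous unimodular semigroup, hence
   differentiable at 0 with derivative i*l for a real l, and then (T(h)x - x)/h tends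
   to i*l*x. *)

section \<open>Complex scalar multiplication and the dual space\<close>

lemma cscale_one [simp]: "1 *\<^sub>C x = x"
  using cscale_of_real[of 1 x] by simp

lemma scaleR_conv_cscale: "r *\<^sub>R x = complex_of_real r *\<^sub>C x"
  by (simp add: cscale_of_real)

lemma cscale_diff_left: "(a - b) *\<^sub>C x = a *\<^sub>C x - b *\<^sub>C x"
  by (metis cscale_add_left eq_diff_eq)

lemma cscale_scaleR_commute: "c *\<^sub>C (r *\<^sub>R x) = r *\<^sub>R (c *\<^sub>C x)"
  by (simp add: scaleR_conv_cscale cscale_assoc mult.commute)

lemma cscale_ii: "\<i> *\<^sub>C \<i> *\<^sub>C x = - x"
  using cscale_of_real[of "-1" x] by (simp add: cscale_assoc)

lemma cscale_Re_Im: "c *\<^sub>C x = Re c *\<^sub>R x + Im c *\<^sub>R (\<i> *\<^sub>C x)"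
proof -
  have "c *\<^sub>C x = (complex_of_real (Re c) + complex_of_real (Im c) * \<i>) *\<^sub>C x"
    by (metis complex_eq mult.commute)
  also have "\<dots> = complex_of_real (Re c) *\<^sub>C x + complex_of_real (Im c) *\<^sub>C (\<i> *\<^sub>C x)"
    by (simp only: cscale_add_left cscale_assoc)
  finally show ?thesis
    by (simp only: cscale_of_real)
qed

lemma bounded_linear_cscale_left: "bounded_linear (\<lambda>c. c *\<^sub>C x)"
proof (rule bounded_linear_intro[where K = "norm x"])
  show "(r *\<^sub>R c) *\<^sub>C x = r *\<^sub>R (c *\<^sub>C x)" for r c
    by (simp add: scaleR_conv_of_real scaleR_conv_cscale cscale_assoc)
qed (simp_all add: cscale_add_left norm_cscale)

lemma dual_space_add: "f \<in> dual_space \<Longrightarrow> g \<in> dual_space \<Longrightarrow> (\<lambda>x. f x + g x) \<in> dual_space"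
  unfolding dual_space_def by (auto intro: bounded_linear_add simp: algebra_simps)

lemma dual_space_cmult: "f \<in> dual_space \<Longrightarrow> (\<lambda>x. c * f x) \<in> dual_space"
  unfolding dual_space_def
  by (auto intro: bounded_linear_compose[OF bounded_linear_mult_right] simp: algebra_simps)

lemma dual_space_compose:
  "f \<in> dual_space \<Longrightarrow> bounded_clinear_op L \<Longrightarrow> (\<lambda>x. f (L x)) \<in> dual_space"
  unfolding dual_space_def bounded_clinear_op_def by (auto intro: bounded_linear_compose[of f L])

lemma dual_space_norm_le: "f \<in> dual_space \<Longrightarrow> cmod (f x) \<le> onorm f * norm x"
  unfolding dual_space_def by (blast intro: onorm)

section \<open>Hahn--Banach\<close>

text \<open>Norm-dominated linear functionals on subspaces, encoded by their graphs so that
  Zorn's lemma can be applied to set inclusion.\<close>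

definition dominated_linear_graph :: "('a::real_normed_vector \<times> real) set \<Rightarrow> bool" where
  "dominated_linear_graph G \<longleftrightarrow> single_valued G \<and>
     (\<forall>a r b s. (a, r) \<in> G \<longrightarrow> (b, s) \<in> G \<longrightarrow> (a + b, r + s) \<in> G) \<and>
     (\<forall>a r c. (a, r) \<in> G \<longrightarrow> (c *\<^sub>R a, c * r) \<in> G) \<and>
     (\<forall>a r. (a, r) \<in> G \<longrightarrow> r \<le> norm a)"

lemma dominated_linear_graphD:
  assumes "dominated_linear_graph G"
  shows "(a, r) \<in> G \<Longrightarrow> (a, s) \<in> G \<Longrightarrow> r = s"
    and "(a, r) \<in> G \<Longrightarrow> (b, s) \<in> G \<Longrightarrow> (a + b, r + s) \<in> G"
    and "(a, r) \<in> G \<Longrightarrow> (c *\<^sub>R a, c * r) \<in> G"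
    and "(a, r) \<in> G \<Longrightarrow> r \<le> norm a"
  using assms unfolding dominated_linear_graph_def single_valued_def by blast+

lemma dominated_linear_graph_line:
  "dominated_linear_graph (range (\<lambda>c. (c *\<^sub>R z, c * norm z)))"
  unfolding dominated_linear_graph_def single_valued_def
proof (intro conjI allI impI; clarsimp)
  fix c d
  show "(c *\<^sub>R z + d *\<^sub>R z, c * norm z + d * norm z) \<in> range (\<lambda>c. (c *\<^sub>R z, c * norm z))"
    by (rule image_eqI[where x = "c + d"]) (simp_all add: algebra_simps)
  show "((c * d) *\<^sub>R z, c * (d * norm z)) \<in> range (\<lambda>c. (c *\<^sub>R z, c * norm z))"
    by (rule image_eqI[where x = "c * d"]) simp_all
  show "c * norm z \<le> \<bar>c\<bar> * norm z"
    by (simp add: mult_right_mono)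
qed

lemma dominated_linear_graph_chain_Union:
  assumes "chain\<^sub>\<subseteq> C" and "\<And>G. G \<in> C \<Longrightarrow> dominated_linear_graph G"
  shows "dominated_linear_graph (\<Union>C)"
proof -
  have common: "\<exists>G\<in>C. p \<in> G \<and> q \<in> G" if "p \<in> \<Union>C" "q \<in> \<Union>C" for p q
    using that assms(1) unfolding chain_subset_def by blast
  show ?thesis
    unfolding dominated_linear_graph_def single_valued_def
  proof (intro conjI allI impI)
    fix a r s assume "(a, r) \<in> \<Union>C" "(a, s) \<in> \<Union>C"
    with common show "r = s" by (metis assms(2) dominated_linear_graphD(1))
  next
    fix a r b s assume "(a, r) \<in> \<Union>C" "(b, s) \<in> \<Union>C"
    with common show "(a + b, r + s) \<in> \<Union>C" by (metis UnionI assms(2) dominated_linear_graphD(2))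
  qed (use assms(2) dominated_linear_graphD in blast)+
qed

text \<open>The one-dimensional extension step: the functional stays dominated when \<open>w\<close> is
  assigned any value \<open>\<xi>\<close> between these two bounds.\<close>

lemma dominated_linear_graph_gap:
  assumes G: "dominated_linear_graph G" and "(a0, r0) \<in> G"
  obtains \<xi> where "\<And>a r. (a, r) \<in> G \<Longrightarrow> r - norm (a - w) \<le> \<xi>"
    and "\<And>b s. (b, s) \<in> G \<Longrightarrow> \<xi> \<le> norm (b + w) - s"
proof -
  have key: "r - norm (a - w) \<le> norm (b + w) - s" if "(a, r) \<in> G" "(b, s) \<in> G" for a r b s
  proof -
    have "r + s \<le> norm (a + b)"
      using that G by (metis dominated_linear_graphD(2,4))
    also have "\<dots> \<le> norm (a - w) + norm (b + w)"
      using norm_triangle_ineq[of "a - w" "b + w"] by simp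
    finally show ?thesis by simp
  qed
  define L where "L = {r - norm (a - w) | a r. (a, r) \<in> G}"
  have "L \<noteq> {}" using assms(2) by (auto simp: L_def)
  moreover have "bdd_above L"
    unfolding L_def bdd_above_def using key[OF _ assms(2)] by blast
  ultimately show thesis
    by (intro that[of "Sup L"] cSup_upper cSup_least) (auto simp: L_def key)
qed

lemma dominated_linear_graph_extension_bound:
  assumes G: "dominated_linear_graph G" and ar: "(a, r) \<in> G"
    and lo: "\<And>a r. (a, r) \<in> G \<Longrightarrow> r - norm (a - w) \<le> \<xi>"
    and hi: "\<And>b s. (b, s) \<in> G \<Longrightarrow> \<xi> \<le> norm (b + w) - s"
  shows "r + c * \<xi> \<le> norm (a + c *\<^sub>R w)"
proof (cases c "0::real" rule: linorder_cases)
  case less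
  have "(1 / - c) * r - norm ((1 / - c) *\<^sub>R a - w) \<le> \<xi>"
    using lo[OF dominated_linear_graphD(3)[OF G ar]] .
  then have "- c * ((1 / - c) * r - norm ((1 / - c) *\<^sub>R a - w)) \<le> - c * \<xi>"
    using less by (simp add: mult_left_mono)
  moreover have "- c * norm ((1 / - c) *\<^sub>R a - w) = norm (a + c *\<^sub>R w)"
  proof -
    have "- c * norm ((1 / - c) *\<^sub>R a - w) = norm ((- c) *\<^sub>R ((1 / - c) *\<^sub>R a - w))"
      using less by simp
    also have "(- c) *\<^sub>R ((1 / - c) *\<^sub>R a - w) = a + c *\<^sub>R w"
      using less by (simp add: algebra_simps)
    finally show ?thesis .
  qed
  ultimately show ?thesis using less by (simp add: algebra_simps)
next
  case equal
  then show ?thesis using G ar by (simp add: dominated_linear_graphD(4))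
next
  case greater
  have "\<xi> \<le> norm ((1 / c) *\<^sub>R a + w) - (1 / c) * r"
    using hi[OF dominated_linear_graphD(3)[OF G ar]] .
  then have "c * \<xi> \<le> c * (norm ((1 / c) *\<^sub>R a + w) - (1 / c) * r)"
    using greater by (simp add: mult_left_mono)
  moreover have "c * norm ((1 / c) *\<^sub>R a + w) = norm (a + c *\<^sub>R w)"
  proof -
    have "c * norm ((1 / c) *\<^sub>R a + w) = norm (c *\<^sub>R ((1 / c) *\<^sub>R a + w))"
      using greater by simp
    also have "c *\<^sub>R ((1 / c) *\<^sub>R a + w) = a + c *\<^sub>R w"
      using greater by (simp add: algebra_simps)
    finally show ?thesis .
  qed
  ultimately show ?thesis using greater by (simp add: algebra_simps)
qed

definition extend_graph :: "('a::real_vector \<times> real) set \<Rightarrow> 'a \<Rightarrow> real \<Rightarrow> ('a \<times> real) set" where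
  "extend_graph G w \<xi> = {(a + c *\<^sub>R w, r + c * \<xi>) | a r c. (a, r) \<in> G}"

lemma single_valued_extend_graph:
  assumes G: "dominated_linear_graph G" and w: "w \<notin> Domain G"
  shows "single_valued (extend_graph G w \<xi>)"
  unfolding single_valued_def
proof (intro allI impI)
  fix p r s assume "(p, r) \<in> extend_graph G w \<xi>" "(p, s) \<in> extend_graph G w \<xi>"
  then obtain a r0 c a' r0' c' where h: "(a, r0) \<in> G" "(a', r0') \<in> G"
    "p = a + c *\<^sub>R w" "p = a' + c' *\<^sub>R w" "r = r0 + c * \<xi>" "s = r0' + c' * \<xi>"
    unfolding extend_graph_def by blast
  have "c = c'"
  proof (rule ccontr)
    assume "c \<noteq> c'"
    have "((1 / (c - c')) *\<^sub>R (a' + (-1) *\<^sub>R a), (1 / (c - c')) * (r0' + (-1) * r0)) \<in> G"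
      using h(1,2) G by (metis dominated_linear_graphD(2,3))
    moreover have "a' + (-1) *\<^sub>R a = (c - c') *\<^sub>R w"
      using h(3,4) by (simp add: algebra_simps)
    then have "(1 / (c - c')) *\<^sub>R (a' + (-1) *\<^sub>R a) = w"
      using \<open>c \<noteq> c'\<close> by simp
    ultimately show False
      using w by auto
  qed
  then have "a = a'"
    using h(3,4) by simp
  then show "r = s"
    using h \<open>c = c'\<close> dominated_linear_graphD(1)[OF G h(1)] by simp
qed

lemma dominated_linear_graph_extend_graph:
  assumes G: "dominated_linear_graph G" and w: "w \<notin> Domain G"
    and lo: "\<And>a r. (a, r) \<in> G \<Longrightarrow> r - norm (a - w) \<le> \<xi>"
    and hi: "\<And>b s. (b, s) \<in> G \<Longrightarrow> \<xi> \<le> norm (b + w) - s"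
  shows "dominated_linear_graph (extend_graph G w \<xi>)"
  unfolding dominated_linear_graph_def
proof (intro conjI allI impI single_valued_extend_graph[OF G w])
  fix p r q s assume "(p, r) \<in> extend_graph G w \<xi>" "(q, s) \<in> extend_graph G w \<xi>"
  then obtain a r0 c b s0 d where h: "(a, r0) \<in> G" "(b, s0) \<in> G"
    "p = a + c *\<^sub>R w" "q = b + d *\<^sub>R w" "r = r0 + c * \<xi>" "s = s0 + d * \<xi>"
    unfolding extend_graph_def by blast
  then have "(p + q, r + s) = ((a + b) + (c + d) *\<^sub>R w, (r0 + s0) + (c + d) * \<xi>)"
    by (simp add: algebra_simps)
  then show "(p + q, r + s) \<in> extend_graph G w \<xi>"
    unfolding extend_graph_def using dominated_linear_graphD(2)[OF G h(1,2)] by blast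
next
  fix p r e assume "(p, r) \<in> extend_graph G w \<xi>"
  then obtain a r0 c where h: "(a, r0) \<in> G" "p = a + c *\<^sub>R w" "r = r0 + c * \<xi>"
    unfolding extend_graph_def by blast
  then have "(e *\<^sub>R p, e * r) = (e *\<^sub>R a + (e * c) *\<^sub>R w, e * r0 + (e * c) * \<xi>)"
    by (simp add: algebra_simps)
  then show "(e *\<^sub>R p, e * r) \<in> extend_graph G w \<xi>"
    unfolding extend_graph_def using dominated_linear_graphD(3)[OF G h(1)] by blast
next
  fix p r assume "(p, r) \<in> extend_graph G w \<xi>"
  then show "r \<le> norm p"
    unfolding extend_graph_def using dominated_linear_graph_extension_bound[OF G _ lo hi] by blast
qed

lemma dominated_linear_graph_extend:
  assumes G: "dominated_linear_graph G" and "(a0, r0) \<in> G" and w: "w \<notin> Domain G"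
  obtains G' where "dominated_linear_graph G'" "G \<subseteq> G'" "w \<in> Domain G'"
proof -
  obtain \<xi> where lo: "\<And>a r. (a, r) \<in> G \<Longrightarrow> r - norm (a - w) \<le> \<xi>"
    and hi: "\<And>b s. (b, s) \<in> G \<Longrightarrow> \<xi> \<le> norm (b + w) - s"
    using dominated_linear_graph_gap[OF assms(1,2)] by metis
  have "G \<subseteq> extend_graph G w \<xi>"
    unfolding extend_graph_def by force
  moreover have "(w, 0 + 1 * \<xi>) \<in> extend_graph G w \<xi>"
    unfolding extend_graph_def using dominated_linear_graphD(3)[OF G assms(2), of 0] by force
  ultimately show thesis
    using that dominated_linear_graph_extend_graph[OF G w lo hi] by blast
qed

lemma dominated_linear_graph_total_functional:
  assumes M: "dominated_linear_graph M" and total: "Domain M = UNIV"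
  obtains g where "linear g" "\<And>a. g a \<le> norm a" "\<And>a. (a, g a) \<in> M"
proof -
  define g where "g w = (THE r. (w, r) \<in> M)" for w
  have graph: "(w, g w) \<in> M" for w
  proof -
    obtain r where r: "(w, r) \<in> M"
      using total by blast
    then have "g w = r"
      unfolding g_def by (rule the_equality) (use dominated_linear_graphD(1)[OF M r] in blast)
    then show ?thesis
      using r by simp
  qed
  have "linear g"
  proof (rule linearI)
    show "g (a + b) = g a + g b" for a b
      using dominated_linear_graphD(1)[OF M graph dominated_linear_graphD(2)[OF M graph graph]] .
    show "g (c *\<^sub>R a) = c *\<^sub>R g a" for c a
      using dominated_linear_graphD(1)[OF M graph dominated_linear_graphD(3)[OF M graph]] by simp
  qed
  then show thesis
    using that graph dominated_linear_graphD(4)[OF M graph] by blast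
qed

lemma norming_linear_functional_exists:
  fixes z :: "'a::real_normed_vector"
  obtains g :: "'a \<Rightarrow> real" where "linear g" "\<And>a. g a \<le> norm a" "g z = norm z"
proof -
  define A where "A = {G. dominated_linear_graph G \<and> (z, norm z) \<in> G}"
  have "(z, norm z) \<in> range (\<lambda>c. (c *\<^sub>R z, c * norm z))"
    by (rule image_eqI[where x = 1]) simp_all
  then have line: "range (\<lambda>c. (c *\<^sub>R z, c * norm z)) \<in> A"
    unfolding A_def using dominated_linear_graph_line by blast
  have "\<exists>U\<in>A. \<forall>G\<in>C. G \<subseteq> U" if "C \<in> chains A" for C
  proof (cases "C = {}")
    case False
    moreover have "chain\<^sub>\<subseteq> C" "C \<subseteq> A"
      using that unfolding chains_def by blast+
    ultimately have "\<Union>C \<in> A"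
      unfolding A_def using dominated_linear_graph_chain_Union by blast
    then show ?thesis by blast
  qed (use line in blast)
  then obtain M where M: "dominated_linear_graph M" "(z, norm z) \<in> M"
    and maximal: "\<And>G. G \<in> A \<Longrightarrow> M \<subseteq> G \<Longrightarrow> G = M"
    using Zorn_Lemma2[of A] unfolding A_def by auto
  have "w \<in> Domain M" for w
  proof (rule ccontr)
    assume "w \<notin> Domain M"
    then obtain G where "dominated_linear_graph G" "M \<subseteq> G" "w \<in> Domain G"
      using dominated_linear_graph_extend[OF M] by blast
    then show False
      using maximal[of G] M(2) \<open>w \<notin> Domain M\<close> unfolding A_def by blast
  qed
  then obtain g where "linear g" "\<And>a. g a \<le> norm a" "\<And>a. (a, g a) \<in> M"
    using dominated_linear_graph_total_functional[OF M(1)] by blast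
  then show thesis
    using that dominated_linear_graphD(1)[OF M(1) _ M(2)] by blast
qed

definition complexify :: "('a::complex_banach \<Rightarrow> real) \<Rightarrow> 'a \<Rightarrow> complex" where
  "complexify g y = complex_of_real (g y) - \<i> * complex_of_real (g (\<i> *\<^sub>C y))"

lemma Re_complexify [simp]: "Re (complexify g y) = g y"
  by (simp add: complexify_def)

lemma complexify_linear:
  assumes g: "linear g"
  shows "complexify g (a + b) = complexify g a + complexify g b"
    and "complexify g (r *\<^sub>R a) = complex_of_real r * complexify g a"
    and "complexify g (c *\<^sub>C a) = c * complexify g a"
proof -
  show add: "complexify g (a + b) = complexify g a + complexify g b" for a b
    by (simp add: complexify_def cscale_add_right linear_add[OF g] algebra_simps)
  show scaleR: "complexify g (r *\<^sub>R a) = complex_of_real r * complexify g a" for r a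
    by (simp add: complexify_def cscale_scaleR_commute linear_scale[OF g] algebra_simps)
  have ii: "complexify g (\<i> *\<^sub>C a) = \<i> * complexify g a" for a
    by (simp add: complexify_def cscale_ii linear_neg[OF g] algebra_simps)
  have "complexify g (c *\<^sub>C a)
      = complex_of_real (Re c) * complexify g a + complex_of_real (Im c) * (\<i> * complexify g a)"
    by (simp only: cscale_Re_Im[of c a] add scaleR ii)
  also have "\<dots> = c * complexify g a"
    by (subst (3) complex_eq[of c]) (simp add: algebra_simps)
  finally show "complexify g (c *\<^sub>C a) = c * complexify g a" .
qed

text \<open>Rotating \<open>y\<close> by a unimodular factor makes \<open>complexify g y\<close> real, where it equals \<open>g\<close>.\<close>

lemma cmod_complexify_le:
  assumes "linear g" and "\<And>a. g a \<le> norm a"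
  shows "cmod (complexify g y) \<le> norm y"
proof (cases "complexify g y = 0")
  case False
  define c where "c = cnj (complexify g y) / complex_of_real (cmod (complexify g y))"
  have "complexify g y * cnj (complexify g y)
      = complex_of_real (cmod (complexify g y)) * complex_of_real (cmod (complexify g y))"
    by (simp only: complex_norm_square[symmetric] power2_eq_square of_real_mult)
  then have "complexify g (c *\<^sub>C y) = complex_of_real (cmod (complexify g y))"
    using False by (simp add: complexify_linear(3)[OF assms(1)] c_def mult.commute)
  then have "cmod (complexify g y) = g (c *\<^sub>C y)"
    by (metis Re_complexify Re_complex_of_real)
  also have "\<dots> \<le> norm (c *\<^sub>C y)"
    by (rule assms(2))
  also have "\<dots> = norm y"
    using False by (simp add: norm_cscale c_def norm_divide)
  finally show ?thesis .
qed simp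

lemma complexify_in_dual_space:
  assumes "linear g" and "\<And>a. g a \<le> norm a"
  shows "complexify g \<in> dual_space"
proof -
  have "bounded_linear (complexify g)"
    by (rule bounded_linear_intro[where K = 1])
      (auto simp: complexify_linear[OF assms(1)] scaleR_conv_of_real cmod_complexify_le[OF assms])
  then show ?thesis
    unfolding dual_space_def using complexify_linear(3)[OF assms(1)] by blast
qed

lemma norming_functional_exists:
  fixes z :: "'a::complex_banach"
  obtains f where "f \<in> dual_space" "\<And>y. cmod (f y) \<le> norm y" "f z = complex_of_real (norm z)"
proof -
  obtain g :: "'a \<Rightarrow> real" where g: "linear g" "\<And>a. g a \<le> norm a" "g z = norm z"
    using norming_linear_functional_exists by blast
  have "(cmod (complexify g z))\<^sup>2 \<le> (Re (complexify g z))\<^sup>2"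
    using cmod_complexify_le[OF g(1,2), of z] g(3) by (simp add: power_mono)
  then have "complexify g z = complex_of_real (norm z)"
    using g(3) by (simp add: complex_eq_iff cmod_power2)
  then show thesis
    using that complexify_in_dual_space[OF g(1,2)] cmod_complexify_le[OF g(1,2)] by blast
qed

section \<open>Weak cluster points\<close>

text \<open>Functionals are tested one at a time: for each \<open>f\<close>, \<open>f z\<close> is a cluster point of
  \<open>f \<circ> y\<close>. This is weaker than clustering in the weak topology but suffices here.\<close>

definition weak_cluster_point :: "('b \<Rightarrow> 'a::complex_banach) \<Rightarrow> 'b filter \<Rightarrow> 'a \<Rightarrow> bool" where
  "weak_cluster_point y F z \<longleftrightarrow>
     (\<forall>f\<in>dual_space. \<forall>S. closed S \<longrightarrow> eventually (\<lambda>t. f (y t) \<in> S) F \<longrightarrow> f z \<in> S)"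

lemma compact_eventually_cluster_point:
  fixes y :: "'b \<Rightarrow> 'a::topological_space"
  assumes "compact K" and "F \<noteq> bot" and "eventually (\<lambda>t. y t \<in> K) F"
  obtains p where "p \<in> K" "\<And>C. closed C \<Longrightarrow> eventually (\<lambda>t. y t \<in> C) F \<Longrightarrow> p \<in> C"
proof -
  have "filtermap y F \<noteq> bot"
    using \<open>F \<noteq> bot\<close> by (simp add: filtermap_bot_iff)
  then obtain p where "p \<in> K" and p: "inf (nhds p) (filtermap y F) \<noteq> bot"
    using \<open>compact K\<close> assms(3) unfolding compact_filter by (auto simp: eventually_filtermap)
  have "p \<in> C" if "closed C" "eventually (\<lambda>t. y t \<in> C) F" for C
  proof (rule ccontr)
    assume "p \<notin> C"
    then have "eventually (\<lambda>q. q \<in> - C) (nhds p)"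
      using that(1) by (intro eventually_nhds_in_open) auto
    moreover have "eventually (\<lambda>q. q \<in> C) (filtermap y F)"
      using that(2) by (simp add: eventually_filtermap)
    ultimately have "eventually (\<lambda>q. False) (inf (nhds p) (filtermap y F))"
      unfolding eventually_inf by blast
    with p show False
      by (simp add: eventually_False)
  qed
  with \<open>p \<in> K\<close> show thesis
    using that by blast
qed

text \<open>The evaluations at \<open>y t\<close> are extended by \<open>0\<close> outside \<open>dual_space\<close>, so that they form a
  net in the product space indexed by all of \<open>'a \<Rightarrow> complex\<close>.\<close>

lemma reflexive_weak_cluster_point_of_evaluations:
  fixes y :: "'b \<Rightarrow> 'a::complex_banach"
  assumes refl: "reflexive_space TYPE('a)"
    and p: "\<And>C. closed C \<Longrightarrow> eventually (\<lambda>t. (\<lambda>f. if f \<in> dual_space then f (y t) else 0) \<in> C) F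
      \<Longrightarrow> p \<in> C"
    and bound: "\<And>f. f \<in> dual_space \<Longrightarrow> cmod (p f) \<le> r * onorm f"
  obtains z where "weak_cluster_point y F z"
proof -
  have add: "p \<in> {q. q (\<lambda>x. f x + g x) = q f + q g}" if "f \<in> dual_space" "g \<in> dual_space" for f g
    by (rule p) (intro closed_Collect_eq continuous_intros continuous_on_product_coordinates,
        simp add: that dual_space_add)
  have mult: "p \<in> {q. q (\<lambda>x. c * f x) = c * q f}" if "f \<in> dual_space" for f c
    by (rule p) (intro closed_Collect_eq continuous_intros continuous_on_product_coordinates,
        simp add: that dual_space_cmult)
  have "\<exists>z::'a. \<forall>f\<in>dual_space. p f = f z"
  proof (rule refl[unfolded reflexive_space_def, rule_format], intro conjI ballI allI)
    show "p (\<lambda>x. f x + g x) = p f + p g" if "f \<in> dual_space" "g \<in> dual_space" for f g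
      using add[OF that] by (rule CollectD)
    show "p (\<lambda>x. c * f x) = c * p f" if "f \<in> dual_space" for f c
      using mult[OF that] by (rule CollectD)
    show "\<exists>K. \<forall>f\<in>dual_space. cmod (p f) \<le> K * onorm f"
      using bound by blast
  qed
  then obtain z where z: "\<And>f. f \<in> dual_space \<Longrightarrow> p f = f z"
    by blast
  have "weak_cluster_point y F z"
    unfolding weak_cluster_point_def
  proof (intro ballI allI impI)
    fix f S assume f: "f \<in> dual_space" and "closed S" and ev: "eventually (\<lambda>t. f (y t) \<in> S) F"
    have "closed ((\<lambda>q. q f) -` S)"
      by (rule closed_vimage[OF \<open>closed S\<close> continuous_on_product_coordinates])
    moreover have "eventually (\<lambda>t. (\<lambda>f. if f \<in> dual_space then f (y t) else 0) \<in> (\<lambda>q. q f) -` S) F"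
      using ev by (simp add: f)
    ultimately have "p \<in> (\<lambda>q. q f) -` S"
      by (rule p)
    then show "f z \<in> S"
      using z[OF f] by simp
  qed
  then show thesis
    by (rule that)
qed

text \<open>Banach--Alaoglu by hand: the evaluations \<open>f \<mapsto> f (y t)\<close> live in a Tychonoff product
  of discs.\<close>

lemma reflexive_weak_cluster_point_exists:
  fixes y :: "'b \<Rightarrow> 'a::complex_banach"
  assumes refl: "reflexive_space TYPE('a)" and "F \<noteq> bot"
    and bounded: "eventually (\<lambda>t. norm (y t) \<le> r) F"
  obtains z where "weak_cluster_point y F z"
proof -
  define K :: "(('a \<Rightarrow> complex) \<Rightarrow> complex) set"
    where "K = PiE UNIV (\<lambda>f. cball 0 (if f \<in> dual_space then r * onorm f else 0))"
  have "compactin (product_topology (\<lambda>_. euclidean) UNIV) K"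
    unfolding K_def by (subst compactin_PiE) auto
  then have "compact K"
    by (simp add: euclidean_product_topology)
  have disc: "cmod (f (y t)) \<le> r * onorm f" if "f \<in> dual_space" "norm (y t) \<le> r" for f t
  proof -
    have "cmod (f (y t)) \<le> onorm f * norm (y t)"
      using dual_space_norm_le[OF that(1)] .
    also have "\<dots> \<le> onorm f * r"
      using that by (intro mult_left_mono onorm_pos_le) (auto simp: dual_space_def)
    finally show ?thesis
      by (simp add: mult.commute)
  qed
  have "eventually (\<lambda>t. (\<lambda>f. if f \<in> dual_space then f (y t) else 0) \<in> K) F"
    using bounded by (rule eventually_mono) (auto simp: K_def disc)
  from compact_eventually_cluster_point[OF \<open>compact K\<close> \<open>F \<noteq> bot\<close> this]
  obtain p where "p \<in> K"
    and p: "\<And>C. closed C \<Longrightarrow> eventually (\<lambda>t. (\<lambda>f. if f \<in> dual_space then f (y t) else 0) \<in> C) F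
      \<Longrightarrow> p \<in> C"
    by blast
  have "cmod (p f) \<le> r * onorm f" if "f \<in> dual_space" for f
    using PiE_mem[OF \<open>p \<in> K\<close>[unfolded K_def], of f] that by simp
  then show thesis
    using reflexive_weak_cluster_point_of_evaluations[OF refl p] that by blast
qed

lemma weak_cluster_point_norm_le:
  assumes "weak_cluster_point y F z" and "eventually (\<lambda>t. norm (y t) \<le> r) F"
  shows "norm z \<le> r"
proof -
  obtain h where h: "h \<in> dual_space" "\<And>v. cmod (h v) \<le> norm v" "h z = complex_of_real (norm z)"
    using norming_functional_exists by blast
  have "eventually (\<lambda>t. h (y t) \<in> cball 0 r) F"
    using assms(2) by (rule eventually_mono) (auto intro: order.trans[OF h(2)])
  then have "h z \<in> cball 0 r"
    using assms(1) h(1) unfolding weak_cluster_point_def by blast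
  then show ?thesis
    using h(3) by simp
qed

lemma weak_cluster_point_image:
  assumes "bounded_clinear_op L" and "weak_cluster_point y F z"
  shows "weak_cluster_point (\<lambda>t. L (y t)) F (L z)"
  unfolding weak_cluster_point_def
proof (intro ballI allI impI)
  fix f S assume f: "f \<in> dual_space" and "closed S" "eventually (\<lambda>t. f (L (y t)) \<in> S) F"
  with dual_space_compose[OF f assms(1)] show "f (L z) \<in> S"
    using assms(2) unfolding weak_cluster_point_def by fast
qed

lemma weak_cluster_point_cmod_tendsto:
  assumes "weak_cluster_point y F z" and "f \<in> dual_space"
    and lim: "((\<lambda>t. cmod (f (y t))) \<longlongrightarrow> l) F"
  shows "cmod (f z) = l"
proof (rule ccontr)
  define e where "e = \<bar>cmod (f z) - l\<bar> / 2"
  assume "cmod (f z) \<noteq> l"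
  then have "e > 0" by (simp add: e_def)
  then have "eventually (\<lambda>t. dist (cmod (f (y t))) l < e) F"
    using lim by (simp add: tendsto_iff)
  then have "eventually (\<lambda>t. f (y t) \<in> norm -` cball l e) F"
    by (rule eventually_mono) (simp add: dist_commute)
  moreover have "closed (norm -` cball l e :: complex set)"
    by (intro closed_vimage closed_cball continuous_on_norm_id)
  ultimately have "f z \<in> norm -` cball l e"
    using assms(1,2) unfolding weak_cluster_point_def by blast
  then show False
    using \<open>e > 0\<close> by (simp add: e_def dist_real_def abs_minus_commute)
qed

section \<open>Unimodular scalar semigroups\<close>

lemma unimodular_semigroup_continuous_on:
  fixes \<gamma> :: "real \<Rightarrow> complex"
  assumes mult: "\<And>s t. s \<ge> 0 \<Longrightarrow> t \<ge> 0 \<Longrightarrow> \<gamma> (s + t) = \<gamma> s * \<gamma> t"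
    and unimodular: "\<And>s. s \<ge> 0 \<Longrightarrow> cmod (\<gamma> s) = 1"
    and lim0: "(\<gamma> \<longlongrightarrow> 1) (at_right 0)"
  shows "continuous_on {0..} \<gamma>"
  unfolding continuous_on_iff
proof (intro ballI allI impI)
  fix u e :: real assume u: "u \<in> {0..}" and "0 < e"
  obtain d where "d > 0" and d: "\<And>h. 0 < h \<Longrightarrow> h < d \<Longrightarrow> dist (\<gamma> h) 1 < e"
    using lim0 \<open>0 < e\<close> unfolding tendsto_iff eventually_at_right_field by force
  have close: "dist (\<gamma> v) (\<gamma> w) < e" if "0 \<le> w" "w \<le> v" "v - w < d" for v w
  proof (cases "v = w")
    case False
    have "\<gamma> v = \<gamma> w * \<gamma> (v - w)"
      using mult[of w "v - w"] that by simp
    then have "dist (\<gamma> v) (\<gamma> w) = cmod (\<gamma> w) * cmod (\<gamma> (v - w) - 1)"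
      by (simp add: dist_norm algebra_simps flip: norm_mult)
    also have "\<dots> = dist (\<gamma> (v - w)) 1"
      using unimodular[OF that(1)] by (simp add: dist_norm)
    also have "\<dots> < e"
      using d[of "v - w"] that False by simp
    finally show ?thesis .
  qed (use \<open>0 < e\<close> in simp)
  show "\<exists>d>0. \<forall>v\<in>{0..}. dist v u < d \<longrightarrow> dist (\<gamma> v) (\<gamma> u) < e"
    using close[of u] close[of _ u] u \<open>d > 0\<close>
    by (intro exI[of _ d]) (auto simp: dist_real_def dist_commute abs_if not_le)
qed

lemma integral_average_tendsto:
  fixes f :: "real \<Rightarrow> complex"
  assumes cont: "continuous_on {0..} f" and "a \<ge> 0"
  shows "((\<lambda>h. integral {a..a + h} f / complex_of_real h) \<longlongrightarrow> f a) (at_right 0)"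
  unfolding tendsto_iff
proof (intro allI impI)
  fix e :: real assume "e > 0"
  then obtain d where "d > 0" and d: "\<And>s. s \<ge> 0 \<Longrightarrow> dist s a < d \<Longrightarrow> dist (f s) (f a) < e / 2"
    using cont \<open>a \<ge> 0\<close> unfolding continuous_on_iff by (metis atLeast_iff half_gt_zero)
  show "eventually (\<lambda>h. dist (integral {a..a + h} f / complex_of_real h) (f a) < e) (at_right 0)"
    unfolding eventually_at_right_field
  proof (intro exI[of _ d] conjI allI impI)
    fix h :: real assume h: "0 < h" "h < d"
    have cont_h: "continuous_on {a..a + h} f"
      by (rule continuous_on_subset[OF cont]) (use \<open>a \<ge> 0\<close> in auto)
    have "integral {a..a + h} (\<lambda>s. f s - f a) = integral {a..a + h} f - integral {a..a + h} (\<lambda>s. f a)"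
      by (intro integral_diff integrable_continuous_interval cont_h continuous_on_const)
    also have "integral {a..a + h} (\<lambda>s. f a) = complex_of_real h * f a"
      using h by (simp add: scaleR_conv_of_real)
    finally have "integral {a..a + h} (\<lambda>s. f s - f a) = integral {a..a + h} f - complex_of_real h * f a" .
    moreover have "norm (integral {a..a + h} (\<lambda>s. f s - f a)) \<le> e / 2 * (a + h - a)"
    proof (rule integral_bound)
      show "continuous_on {a..a + h} (\<lambda>s. f s - f a)"
        using cont_h by (intro continuous_intros)
      show "norm (f s - f a) \<le> e / 2" if "s \<in> {a..a + h}" for s
        using d[of s] that \<open>a \<ge> 0\<close> h by (auto simp: dist_real_def dist_norm)
    qed (use h in auto)
    ultimately have "cmod (integral {a..a + h} f - complex_of_real h * f a) \<le> e / 2 * h"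
      by simp
    moreover have "integral {a..a + h} f / complex_of_real h - f a
        = (integral {a..a + h} f - complex_of_real h * f a) / complex_of_real h"
      using h by (simp add: field_simps)
    ultimately have "dist (integral {a..a + h} f / complex_of_real h) (f a) \<le> e / 2"
      using h by (simp add: dist_norm norm_divide divide_le_eq)
    then show "dist (integral {a..a + h} f / complex_of_real h) (f a) < e"
      using \<open>e > 0\<close> by simp
  qed (use \<open>d > 0\<close> in auto)
qed

lemma semigroup_integral_shift:
  fixes \<gamma> :: "real \<Rightarrow> complex"
  assumes mult: "\<And>s t. s \<ge> 0 \<Longrightarrow> t \<ge> 0 \<Longrightarrow> \<gamma> (s + t) = \<gamma> s * \<gamma> t"
    and cont: "continuous_on {0..} \<gamma>" and "h \<ge> 0" and "\<delta> \<ge> 0"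
  shows "(\<gamma> h - 1) * integral {0..\<delta>} \<gamma> = integral {\<delta>..\<delta> + h} \<gamma> - integral {0..h} \<gamma>"
proof -
  have integrable: "\<gamma> integrable_on {a..b}" if "0 \<le> a" for a b
    using continuous_on_subset[OF cont, of "{a..b}"] that by (intro integrable_continuous_interval) auto
  have "\<gamma> h * integral {0..\<delta>} \<gamma> = integral {0..\<delta>} (\<lambda>s. \<gamma> h * \<gamma> s)"
    by simp
  also have "\<dots> = integral {0..\<delta>} (\<lambda>s. \<gamma> (h + s))"
    by (rule integral_cong) (use mult \<open>h \<ge> 0\<close> in auto)
  also have "\<dots> = integral {h..\<delta> + h} \<gamma>"
    using has_integral_shift_Icc_real[of \<gamma> h "integral {h..\<delta> + h} \<gamma>" 0 \<delta>] integrable[of h "\<delta> + h"] \<open>h \<ge> 0\<close>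
    by (intro integral_unique) (simp add: integrable_integral o_def)
  finally have "\<gamma> h * integral {0..\<delta>} \<gamma> = integral {h..\<delta> + h} \<gamma>" .
  moreover have "integral {0..h} \<gamma> + integral {h..\<delta> + h} \<gamma> = integral {0..\<delta> + h} \<gamma>"
    by (rule Henstock_Kurzweil_Integration.integral_combine) (use assms(3,4) integrable in auto)
  moreover have "integral {0..\<delta>} \<gamma> + integral {\<delta>..\<delta> + h} \<gamma> = integral {0..\<delta> + h} \<gamma>"
    by (rule Henstock_Kurzweil_Integration.integral_combine) (use assms(3,4) integrable in auto)
  ultimately show ?thesis
    by (simp add: algebra_simps)
qed

text \<open>By the shift identity, \<open>(\<gamma> h - 1) / h\<close> is a difference of two averages of \<open>\<gamma>\<close> over
  intervals of length \<open>h\<close>, divided by \<open>\<integral>\<^sub>0\<^sup>\<delta> \<gamma>\<close>; this integral is nonzero for small \<open>\<delta>\<close>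
  because its average tends to \<open>\<gamma> 0 = 1\<close>.\<close>

lemma continuous_semigroup_difference_quotient_tendsto:
  fixes \<gamma> :: "real \<Rightarrow> complex"
  assumes mult: "\<And>s t. s \<ge> 0 \<Longrightarrow> t \<ge> 0 \<Longrightarrow> \<gamma> (s + t) = \<gamma> s * \<gamma> t"
    and cont: "continuous_on {0..} \<gamma>" and "\<gamma> 0 = 1"
  obtains \<mu> where "((\<lambda>h. (\<gamma> h - 1) / complex_of_real h) \<longlongrightarrow> \<mu>) (at_right 0)"
proof -
  define I where "I \<delta> = integral {0..\<delta>} \<gamma>" for \<delta>
  have "((\<lambda>\<delta>. I \<delta> / complex_of_real \<delta>) \<longlongrightarrow> 1) (at_right 0)"
    using integral_average_tendsto[OF cont, of 0] \<open>\<gamma> 0 = 1\<close> by (simp add: I_def)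
  then have "eventually (\<lambda>\<delta>. dist (I \<delta> / complex_of_real \<delta>) 1 < 1) (at_right 0)"
    unfolding tendsto_iff by simp
  then obtain b where "b > 0" and b: "\<And>\<delta>. 0 < \<delta> \<Longrightarrow> \<delta> < b \<Longrightarrow> dist (I \<delta> / complex_of_real \<delta>) 1 < 1"
    unfolding eventually_at_right_field by blast
  define \<delta> where "\<delta> = b / 2"
  have "\<delta> > 0"
    using \<open>b > 0\<close> by (simp add: \<delta>_def)
  have "I \<delta> \<noteq> 0"
    using b[of \<delta>] \<open>b > 0\<close> by (auto simp: \<delta>_def)
  have "((\<lambda>h. (integral {\<delta>..\<delta> + h} \<gamma> / complex_of_real h - integral {0..0 + h} \<gamma> / complex_of_real h) / I \<delta>)
      \<longlongrightarrow> (\<gamma> \<delta> - \<gamma> 0) / I \<delta>) (at_right 0)"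
    by (intro tendsto_intros integral_average_tendsto[OF cont]) (use \<open>\<delta> > 0\<close> \<open>I \<delta> \<noteq> 0\<close> in auto)
  moreover have "eventually (\<lambda>h. (integral {\<delta>..\<delta> + h} \<gamma> / complex_of_real h
      - integral {0..0 + h} \<gamma> / complex_of_real h) / I \<delta> = (\<gamma> h - 1) / complex_of_real h) (at_right 0)"
    unfolding eventually_at_right_field
  proof (intro exI[of _ 1] conjI allI impI)
    fix h :: real assume h: "0 < h" "h < 1"
    have shift: "(\<gamma> h - 1) * I \<delta> = integral {\<delta>..\<delta> + h} \<gamma> - integral {0..0 + h} \<gamma>"
      using semigroup_integral_shift[OF mult cont, of h \<delta>] h \<open>\<delta> > 0\<close> by (simp add: I_def)
    show "(integral {\<delta>..\<delta> + h} \<gamma> / complex_of_real h - integral {0..0 + h} \<gamma> / complex_of_real h)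
        / I \<delta> = (\<gamma> h - 1) / complex_of_real h"
      unfolding diff_divide_distrib[symmetric] shift[symmetric] using \<open>I \<delta> \<noteq> 0\<close> by simp
  qed simp
  ultimately have "((\<lambda>h. (\<gamma> h - 1) / complex_of_real h) \<longlongrightarrow> (\<gamma> \<delta> - \<gamma> 0) / I \<delta>) (at_right 0)"
    by (rule Lim_transform_eventually)
  then show thesis
    by (rule that)
qed

text \<open>Differentiating \<open>\<gamma> h * cnj (\<gamma> h) = 1\<close> at \<open>0\<close>.\<close>

lemma unimodular_difference_quotient_imaginary:
  fixes \<gamma> :: "real \<Rightarrow> complex"
  assumes unimodular: "\<And>h. h > 0 \<Longrightarrow> cmod (\<gamma> h) = 1"
    and lim0: "(\<gamma> \<longlongrightarrow> 1) (at_right 0)"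
    and lim: "((\<lambda>h. (\<gamma> h - 1) / complex_of_real h) \<longlongrightarrow> \<mu>) (at_right 0)"
  shows "Re \<mu> = 0"
proof -
  have "((\<lambda>h. (\<gamma> h - 1) / complex_of_real h * cnj (\<gamma> h) + cnj ((\<gamma> h - 1) / complex_of_real h))
      \<longlongrightarrow> \<mu> * cnj 1 + cnj \<mu>) (at_right 0)"
    by (intro tendsto_intros lim lim0)
  moreover have "eventually (\<lambda>h. (\<gamma> h - 1) / complex_of_real h * cnj (\<gamma> h)
      + cnj ((\<gamma> h - 1) / complex_of_real h) = 0) (at_right 0)"
    unfolding eventually_at_right_field
  proof (intro exI[of _ 1] conjI allI impI)
    fix h :: real assume h: "0 < h" "h < 1"
    then have "\<gamma> h * cnj (\<gamma> h) = 1"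
      using unimodular[of h] complex_norm_square[of "\<gamma> h"] by simp
    then show "(\<gamma> h - 1) / complex_of_real h * cnj (\<gamma> h) + cnj ((\<gamma> h - 1) / complex_of_real h) = 0"
      using h by (simp add: field_simps)
  qed simp
  ultimately have "((\<lambda>h. 0) \<longlongrightarrow> \<mu> * cnj 1 + cnj \<mu>) (at_right (0::real))"
    by (rule Lim_transform_eventually)
  then have "\<mu> + cnj \<mu> = 0"
    by (simp add: tendsto_const_iff)
  then show ?thesis
    by (metis complex_add_cnj of_real_eq_0_iff mult_eq_0_iff zero_neq_numeral)
qed

lemma unimodular_semigroup_imaginary_derivative:
  fixes \<gamma> :: "real \<Rightarrow> complex"
  assumes mult: "\<And>s t. s \<ge> 0 \<Longrightarrow> t \<ge> 0 \<Longrightarrow> \<gamma> (s + t) = \<gamma> s * \<gamma> t"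
    and unimodular: "\<And>s. s \<ge> 0 \<Longrightarrow> cmod (\<gamma> s) = 1"
    and lim0: "(\<gamma> \<longlongrightarrow> 1) (at_right 0)"
  obtains l :: real where "((\<lambda>h. (\<gamma> h - 1) / complex_of_real h) \<longlongrightarrow> \<i> * complex_of_real l) (at_right 0)"
proof -
  have "\<gamma> 0 = 1"
  proof -
    have "\<gamma> 0 * \<gamma> 0 = \<gamma> 0 * 1" "\<gamma> 0 \<noteq> 0"
      using mult[of 0 0] unimodular[of 0] by auto
    then show ?thesis
      by (metis mult_left_cancel)
  qed
  then obtain \<mu> where lim: "((\<lambda>h. (\<gamma> h - 1) / complex_of_real h) \<longlongrightarrow> \<mu>) (at_right 0)"
    using continuous_semigroup_difference_quotient_tendsto[OF mult
        unimodular_semigroup_continuous_on[OF mult unimodular lim0]] by blast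
  moreover have "Re \<mu> = 0"
    using unimodular_difference_quotient_imaginary[OF unimodular lim0 lim] by simp
  then have "\<mu> = \<i> * complex_of_real (Im \<mu>)"
    by (simp add: complex_eq_iff)
  ultimately show thesis
    using that by metis
qed

section \<open>Contraction semigroups with an orbit on an exposed face\<close>

lemma C0_contraction_semigroupD:
  assumes "C0_contraction_semigroup T"
  shows "t \<ge> 0 \<Longrightarrow> bounded_clinear_op (T t)"
    and "T 0 x = x"
    and "s \<ge> 0 \<Longrightarrow> t \<ge> 0 \<Longrightarrow> T (s + t) x = T s (T t x)"
    and "((\<lambda>t. T t x) \<longlongrightarrow> x) (at_right 0)"
    and "t \<ge> 0 \<Longrightarrow> norm (T t x) \<le> norm x"
  using assms unfolding C0_contraction_semigroup_def by auto

lemma C0_contraction_semigroup_cscale: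
  "C0_contraction_semigroup T \<Longrightarrow> t \<ge> 0 \<Longrightarrow> T t (c *\<^sub>C x) = c *\<^sub>C T t x"
  using C0_contraction_semigroupD(1) unfolding bounded_clinear_op_def by blast

lemma exposesD:
  assumes "exposes xs x"
  shows "xs \<in> dual_space" and "norm x = 1" and "xs x = 1" and "cmod (xs v) \<le> norm v"
  using assms dual_space_norm_le[of xs v] unfolding exposes_def by auto

lemma exposes_unimodular_eq:
  assumes "exposes xs x" and "norm w \<le> 1" and "cmod (xs w) = 1"
  shows "w = xs w *\<^sub>C x"
proof -
  define c where "c = cnj (xs w)"
  have "c * xs w = 1"
    using complex_norm_square[of "xs w"] assms(3) by (simp add: c_def mult.commute)
  then have "xs (c *\<^sub>C w) = 1"
    using exposesD(1)[OF assms(1)] by (simp add: dual_space_def)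
  moreover have "norm (c *\<^sub>C w) \<le> 1"
    using assms(2,3) by (simp add: norm_cscale c_def)
  ultimately have "norm (c *\<^sub>C w) = 1"
    using exposesD(4)[OF assms(1), of "c *\<^sub>C w"] by simp
  with \<open>xs (c *\<^sub>C w) = 1\<close> have "c *\<^sub>C w = x"
    using assms(1) unfolding exposes_def by force
  then have "xs w *\<^sub>C x = (xs w * c) *\<^sub>C w"
    by (metis cscale_assoc)
  also have "\<dots> = w"
    using \<open>c * xs w = 1\<close> by (simp add: mult.commute)
  finally show ?thesis ..
qed

lemma C0_contraction_semigroup_cluster_orbit_cmod:
  assumes T: "C0_contraction_semigroup T" and z: "weak_cluster_point (\<lambda>t. T t x) at_top z"
    and "f \<in> dual_space" and lim: "((\<lambda>t. cmod (f (T t x))) \<longlongrightarrow> l) at_top" and "s \<ge> 0"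
  shows "cmod (f (T s z)) = l"
proof (rule weak_cluster_point_cmod_tendsto)
  show "weak_cluster_point (\<lambda>t. T s (T t x)) at_top (T s z)"
    using weak_cluster_point_image[OF C0_contraction_semigroupD(1)[OF T \<open>s \<ge> 0\<close>] z] .
  have "((\<lambda>t. cmod (f (T (s + t) x))) \<longlongrightarrow> l) at_top"
    using filterlim_compose[OF lim filterlim_tendsto_add_at_top[OF tendsto_const filterlim_ident]] .
  moreover have "eventually (\<lambda>t. cmod (f (T (s + t) x)) = cmod (f (T s (T t x)))) at_top"
    using eventually_ge_at_top[of 0] by eventually_elim (simp add: C0_contraction_semigroupD(3)[OF T \<open>s \<ge> 0\<close>])
  ultimately show "((\<lambda>t. cmod (f (T s (T t x)))) \<longlongrightarrow> l) at_top"
    by (rule Lim_transform_eventually)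
qed fact

text \<open>\<open>z\<close> itself lies on the line through \<open>x\<close> (take \<open>s = 0\<close>), so the orbit of \<open>x\<close> is a
  unimodular multiple of the orbit of \<open>z\<close>.\<close>

lemma C0_contraction_semigroup_orbit_exposed:
  assumes T: "C0_contraction_semigroup T" and x: "exposes xs x" and "norm z \<le> 1"
    and z: "\<And>s. s \<ge> 0 \<Longrightarrow> cmod (xs (T s z)) = 1" and "s \<ge> 0"
  shows "T s x = xs (T s x) *\<^sub>C x \<and> cmod (xs (T s x)) = 1"
proof -
  have "cmod (xs z) = 1"
    using z[of 0] C0_contraction_semigroupD(2)[OF T] by simp
  then have z_eq: "xs z *\<^sub>C x = z"
    using exposes_unimodular_eq[OF x \<open>norm z \<le> 1\<close>] by simp
  have "T s z = xs z *\<^sub>C T s x"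
    using C0_contraction_semigroup_cscale[OF T \<open>s \<ge> 0\<close>, of "xs z" x] by (simp only: z_eq)
  then have "xs (T s z) = xs z * xs (T s x)"
    using exposesD(1)[OF x] by (simp add: dual_space_def)
  then have "cmod (xs (T s x)) = 1"
    using z[OF \<open>s \<ge> 0\<close>] \<open>cmod (xs z) = 1\<close> by (simp add: norm_mult)
  moreover have "norm (T s x) \<le> 1"
    using C0_contraction_semigroupD(5)[OF T \<open>s \<ge> 0\<close>, of x] exposesD(2)[OF x] by simp
  ultimately show ?thesis
    using exposes_unimodular_eq[OF x] by simp
qed

lemma generator_of_scalar_orbit:
  assumes orbit: "\<And>h. h > 0 \<Longrightarrow> T h x = \<gamma> h *\<^sub>C x"
    and lim: "((\<lambda>h. (\<gamma> h - 1) / complex_of_real h) \<longlongrightarrow> \<mu>) (at_right 0)"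
  shows "x \<in> gen_domain T" and "generator T x = \<mu> *\<^sub>C x"
proof -
  have "((\<lambda>h. ((\<gamma> h - 1) / complex_of_real h) *\<^sub>C x) \<longlongrightarrow> \<mu> *\<^sub>C x) (at_right 0)"
    by (rule bounded_linear.tendsto[OF bounded_linear_cscale_left lim])
  moreover have "eventually (\<lambda>h. ((\<gamma> h - 1) / complex_of_real h) *\<^sub>C x = (1 / h) *\<^sub>R (T h x - x)) (at_right 0)"
    unfolding eventually_at_right_field
  proof (intro exI[of _ 1] conjI allI impI)
    fix h :: real assume h: "0 < h" "h < 1"
    have "T h x - x = (\<gamma> h - 1) *\<^sub>C x"
      using orbit[of h] h by (simp add: cscale_diff_left)
    then have "(1 / h) *\<^sub>R (T h x - x) = (complex_of_real (1 / h) * (\<gamma> h - 1)) *\<^sub>C x"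
      by (simp add: scaleR_conv_cscale cscale_assoc)
    then show "((\<gamma> h - 1) / complex_of_real h) *\<^sub>C x = (1 / h) *\<^sub>R (T h x - x)"
      by (simp add: field_simps)
  qed simp
  ultimately have lim_x: "((\<lambda>h. (1 / h) *\<^sub>R (T h x - x)) \<longlongrightarrow> \<mu> *\<^sub>C x) (at_right 0)"
    by (rule Lim_transform_eventually)
  then show "x \<in> gen_domain T"
    unfolding gen_domain_def by blast
  show "generator T x = \<mu> *\<^sub>C x"
    unfolding generator_def using lim_x by (rule tendsto_Lim[rotated]) simp
qed

lemma C0_contraction_semigroup_eigenvector_generator:
  assumes T: "C0_contraction_semigroup T" and f: "f \<in> dual_space" "f x = 1"
    and orbit: "\<And>s. s \<ge> 0 \<Longrightarrow> T s x = f (T s x) *\<^sub>C x \<and> cmod (f (T s x)) = 1"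
  shows "x \<in> gen_domain T \<and> (\<exists>l::real. generator T x = (\<i> * complex_of_real l) *\<^sub>C x)"
proof -
  define \<gamma> where "\<gamma> s = f (T s x)" for s
  have \<gamma>: "T s x = \<gamma> s *\<^sub>C x" "cmod (\<gamma> s) = 1" if "s \<ge> 0" for s
    using orbit[OF that] unfolding \<gamma>_def by blast+
  have "\<gamma> (s + t) = \<gamma> s * \<gamma> t" if "s \<ge> 0" "t \<ge> 0" for s t
  proof -
    have "T (s + t) x = T s (\<gamma> t *\<^sub>C x)"
      using C0_contraction_semigroupD(3)[OF T that] \<gamma>(1)[OF that(2)] by simp
    also have "\<dots> = (\<gamma> t * \<gamma> s) *\<^sub>C x"
      using C0_contraction_semigroup_cscale[OF T that(1)] \<gamma>(1)[OF that(1)] by (simp add: cscale_assoc)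
    finally show ?thesis
      using f by (simp add: \<gamma>_def dual_space_def mult.commute)
  qed
  moreover have "(\<gamma> \<longlongrightarrow> 1) (at_right 0)"
    using bounded_linear.tendsto[OF _ C0_contraction_semigroupD(4)[OF T, of x], of f] f
    unfolding \<gamma>_def dual_space_def by simp
  ultimately obtain l :: real
    where "((\<lambda>h. (\<gamma> h - 1) / complex_of_real h) \<longlongrightarrow> \<i> * complex_of_real l) (at_right 0)"
    using unimodular_semigroup_imaginary_derivative[of \<gamma>] \<gamma>(2) by blast
  then show ?thesis
    using generator_of_scalar_orbit[of T x \<gamma>] \<gamma>(1) by auto
qed

theorem theorem5:
  fixes T :: "real \<Rightarrow> 'a::complex_banach \<Rightarrow> 'a"
    and x :: 'a and xs :: "'a \<Rightarrow> complex"
  assumes "reflexive_space TYPE('a)"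
    and "exposes xs x"
    and "C0_contraction_semigroup T"
    and "((\<lambda>t. cmod (xs (T t x))) \<longlongrightarrow> 1) at_top"
  shows "x \<in> gen_domain T \<and> (\<exists>l::real. generator T x = (\<i> * complex_of_real l) *\<^sub>C x)"
proof -
  have bounded: "eventually (\<lambda>t. norm (T t x) \<le> 1) at_top"
    using eventually_ge_at_top[of 0] by (rule eventually_mono)
      (metis C0_contraction_semigroupD(5)[OF assms(3)] exposesD(2)[OF assms(2)])
  obtain z where z: "weak_cluster_point (\<lambda>t. T t x) at_top z"
    using reflexive_weak_cluster_point_exists[OF assms(1) trivial_limit_at_top_linorder bounded] .
  have "norm z \<le> 1"
    using weak_cluster_point_norm_le[OF z bounded] .
  have on_face: "cmod (xs (T s z)) = 1" if "s \<ge> 0" for s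
    using C0_contraction_semigroup_cluster_orbit_cmod[OF assms(3) z exposesD(1)[OF assms(2)] assms(4) that] .
  have "T s x = xs (T s x) *\<^sub>C x \<and> cmod (xs (T s x)) = 1" if "s \<ge> 0" for s
    using C0_contraction_semigroup_orbit_exposed[OF assms(3,2) \<open>norm z \<le> 1\<close> on_face that] .
  then show ?thesis
    by (rule C0_contraction_semigroup_eigenvector_generator[OF assms(3) exposesD(1,3)[OF assms(2)]])
qed

end
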